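(* Let $a\in\mathbb{R}$, $\beta,\eta,\nu>0$ with $\eta^2<2\beta\nu$, $\mu=\eta/\nu$, $\sigma=2\beta/\nu$, and $p\in[1-\beta,1]$. Consider the quantile problem $$\sup_{q\ge a,\,f}\ q\quad\text{s.t.}\quad (1-\beta)+\int_a^q f(x)dx=p,\ \int_a^\infty f(x)dx=\beta,\ f(a)=f(a+)=\eta,\ f'_+(a)\ge-\nu,\ f\text{ convex on }[a,\infty),\ f\ge0\text{ on }[a,\infty).$$ Let $z^*(a,b)$ be the optimal value of the problem $\sup_f\int_b^\infty f(x)dx$ subject to the last five constraints above, and define $q^*=\inf\{b\ge a: z^*(a,b)=1-p\}$ (with $\inf\emptyset=\infty$). Then $q^*$ equals the optimal value of the quantile problem, and $$q^*=\begin{cases}a+\mu-\sqrt{\mu^2-\sigma+\frac{2(1-p)}{\nu}}&\text{if }1-\beta\le p\le1-\beta+\frac{\eta^2}{2\nu},\\ \infty&\text{if }p>1-\beta+\frac{\eta^2}{2\nu}.\end{cases}$$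
   Context: $f(a+)$ denotes the right limit of $f$ at $a$ and $f'_+$ the right derivative. The first constraint encodes that the distribution function equals $1-\beta$ at $a$ and equals $p$ at $q$, i.e. $q$ is the $p$-quantile. *)

theory Defs
  imports "HOL-Analysis.Analysis"
begin

definition feasible :: "real \<Rightarrow> real \<Rightarrow> real \<Rightarrow> real \<Rightarrow> (real \<Rightarrow> real) \<Rightarrow> bool" where
  "feasible a \<beta> \<eta> \<nu> f \<longleftrightarrow>
     (f has_integral \<beta>) {a..} \<and>
     f a = \<eta> \<and> (f \<longlongrightarrow> \<eta>) (at_right a) \<and>
     (\<exists>D. (f has_real_derivative D) (at a within {a..}) \<and> D \<ge> - \<nu>) \<and>
     convex_on {a..} f \<and>
     (\<forall>x\<ge>a. f x \<ge> 0)"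

definition zstar :: "real \<Rightarrow> real \<Rightarrow> real \<Rightarrow> real \<Rightarrow> real \<Rightarrow> ereal" where
  "zstar a \<beta> \<eta> \<nu> b = Sup {ereal (integral {b..} f) | f. feasible a \<beta> \<eta> \<nu> f}"

definition qstar :: "real \<Rightarrow> real \<Rightarrow> real \<Rightarrow> real \<Rightarrow> real \<Rightarrow> ereal" where
  "qstar a \<beta> \<eta> \<nu> p = Inf {ereal b | b. b \<ge> a \<and> zstar a \<beta> \<eta> \<nu> b = ereal (1 - p)}"

definition quantile_value :: "real \<Rightarrow> real \<Rightarrow> real \<Rightarrow> real \<Rightarrow> real \<Rightarrow> ereal" where
  "quantile_value a \<beta> \<eta> \<nu> p = Sup {ereal q | q f. q \<ge> a \<and> feasible a \<beta> \<eta> \<nu> f \<and>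
       (1 - \<beta>) + integral {a..q} f = p}"

end

theory Submission
  imports Defs
begin

text \<open>Convexity and the bound on the right derivative force every feasible \<open>f\<close> to lie above
  the tangent \<open>\<eta> - \<nu> (x - a)\<close>, and integrability forces \<open>f\<close> to be nonincreasing. Hence the mass
  of \<open>f\<close> on \<open>[a, b]\<close> is at least the mass \<open>\<eta> t - \<nu> t\<^sup>2 / 2\<close> of the tangent on \<open>[a, a + t]\<close>,
  \<open>t = min (b - a) (\<eta> / \<nu>)\<close>. Functions that follow the tangent down to a small height \<open>c\<close> and
  then spend the remaining mass on a flat triangle show that this bound determines \<open>z*\<close> exactly.
  So the level set \<open>z* = 1 - p\<close> starts where the tangent mass equals \<open>p - (1 - \<beta>)\<close>, and is empty
  once \<open>p - (1 - \<beta>)\<close> exceeds the full tangent mass \<open>\<eta>\<^sup>2 / (2 \<nu>)\<close>. The same witnesses, with the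
  intermediate value theorem for the cumulative mass, give the same value for the quantile problem.\<close>

definition tangent_mass :: "real \<Rightarrow> real \<Rightarrow> real \<Rightarrow> real" where
  "tangent_mass \<eta> \<nu> t = \<eta> * t - \<nu> * t\<^sup>2 / 2"

lemma has_integral_tangent_mass:
  assumes "u \<le> v"
  shows "((\<lambda>x. \<eta> - \<nu> * (x - u)) has_integral tangent_mass \<eta> \<nu> (v - u)) {u..v}"
proof -
  have "((\<lambda>x. \<eta> - \<nu> * (x - u)) has_integral
          ((\<lambda>x. tangent_mass \<eta> \<nu> (x - u)) v - (\<lambda>x. tangent_mass \<eta> \<nu> (x - u)) u)) {u..v}"
    unfolding tangent_mass_def
    by (rule fundamental_theorem_of_calculus[OF assms])
      (auto intro!: derivative_eq_intros simp flip: has_real_derivative_iff_has_vector_derivative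
            simp: field_simps power2_eq_square)
  then show ?thesis
    by (simp add: tangent_mass_def)
qed

lemma tangent_mass_strict_mono:
  assumes "\<nu> > 0" "t < t'" "t' \<le> \<eta> / \<nu>"
  shows "tangent_mass \<eta> \<nu> t < tangent_mass \<eta> \<nu> t'"
proof -
  have "\<nu> * t' \<le> \<eta>" "\<nu> * t < \<nu> * t'"
    using assms by (simp_all add: le_divide_eq mult.commute)
  then have "\<nu> * (t + t') < 2 * \<eta>"
    by (simp add: distrib_left)
  then have "0 < (t' - t) * (\<eta> - \<nu> * (t + t') / 2)"
    using assms(2) by simp
  also have "\<dots> = tangent_mass \<eta> \<nu> t' - tangent_mass \<eta> \<nu> t"
    by (simp add: tangent_mass_def field_simps power2_eq_square)
  finally show ?thesis by simp
qed

lemma tangent_mass_vertex: "\<nu> \<noteq> 0 \<Longrightarrow> tangent_mass \<eta> \<nu> (\<eta> / \<nu>) = \<eta>\<^sup>2 / (2 * \<nu>)"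
  by (simp add: tangent_mass_def field_simps power2_eq_square)

lemma tangent_mass_le_vertex:
  assumes "\<nu> > 0"
  shows "tangent_mass \<eta> \<nu> t \<le> \<eta>\<^sup>2 / (2 * \<nu>)"
proof -
  have "\<eta>\<^sup>2 / (2 * \<nu>) - tangent_mass \<eta> \<nu> t = \<nu> * (t - \<eta> / \<nu>)\<^sup>2 / 2"
    using assms by (simp add: tangent_mass_def field_simps power2_eq_square)
  then show ?thesis
    using assms by (metis diff_ge_0_iff_ge divide_nonneg_pos mult_nonneg_nonneg less_imp_le
        zero_le_power2 zero_less_numeral)
qed

lemma tangent_mass_inverse:
  assumes "\<nu> > 0" "\<eta> \<ge> 0" "0 \<le> m" "m \<le> \<eta>\<^sup>2 / (2 * \<nu>)"
  defines "t \<equiv> \<eta> / \<nu> - sqrt ((\<eta> / \<nu>)\<^sup>2 - 2 * m / \<nu>)"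
  shows "0 \<le> t" "t \<le> \<eta> / \<nu>" "tangent_mass \<eta> \<nu> t = m"
proof -
  define R where "R = (\<eta> / \<nu>)\<^sup>2 - 2 * m / \<nu>"
  have "2 * m / \<nu> \<le> (\<eta> / \<nu>)\<^sup>2"
    using assms by (simp add: field_simps power2_eq_square)
  then have R: "0 \<le> R" "R \<le> (\<eta> / \<nu>)\<^sup>2"
    using assms unfolding R_def by auto
  then have "sqrt R \<le> \<eta> / \<nu>"
    using assms by (metis real_sqrt_le_mono real_sqrt_abs abs_of_nonneg divide_nonneg_pos less_imp_le)
  then show "0 \<le> t" "t \<le> \<eta> / \<nu>"
    using R unfolding t_def R_def[symmetric] by auto
  have "tangent_mass \<eta> \<nu> t = \<nu> / 2 * ((\<eta> / \<nu>)\<^sup>2 - (\<eta> / \<nu> - t)\<^sup>2)"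
    using assms(1) by (simp add: tangent_mass_def field_simps power2_eq_square)
  also have "(\<eta> / \<nu> - t)\<^sup>2 = R"
    using R unfolding t_def R_def by simp
  finally show "tangent_mass \<eta> \<nu> t = m"
    using assms(1) unfolding R_def by (simp add: field_simps)
qed

lemma convex_on_max:
  assumes "convex_on S f" "convex_on S g"
  shows "convex_on S (\<lambda>x. max (f x) (g x))"
proof -
  have "max (f (u *\<^sub>R x + v *\<^sub>R y)) (g (u *\<^sub>R x + v *\<^sub>R y))
          \<le> u * max (f x) (g x) + v * max (f y) (g y)"
    if "x \<in> S" "y \<in> S" "0 \<le> u" "0 \<le> v" "u + v = 1" for x y u v
  proof -
    have "f (u *\<^sub>R x + v *\<^sub>R y) \<le> u * f x + v * f y" "g (u *\<^sub>R x + v *\<^sub>R y) \<le> u * g x + v * g y"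
      using assms that by (auto simp: convex_on_def)
    moreover have "u * f x + v * f y \<le> u * max (f x) (g x) + v * max (f y) (g y)"
      "u * g x + v * g y \<le> u * max (f x) (g x) + v * max (f y) (g y)"
      using that by (auto intro!: add_mono mult_left_mono)
    ultimately show ?thesis by linarith
  qed
  then show ?thesis
    using assms by (auto simp: convex_on_def)
qed

lemma convex_on_affine: "convex_on UNIV (\<lambda>x::real. A - B * (x - u))"
  by (rule convex_on_linorderI) (auto simp: algebra_simps)

lemma convex_on_atLeast_above_tangent:
  fixes f :: "real \<Rightarrow> real"
  assumes cvx: "convex_on {a..} f" and D: "(f has_real_derivative D) (at a within {a..})"
    and "a \<le> x"
  shows "f a + D * (x - a) \<le> f x"
proof (cases "x = a")
  case False
  with assms have xa: "a < x" by simp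
  have "((\<lambda>y. (f y - f a) / (y - a)) \<longlongrightarrow> D) (at a within {a..})"
    using D by (simp add: has_field_derivative_iff)
  then have lim: "((\<lambda>y. (f y - f a) / (y - a)) \<longlongrightarrow> D) (at_right a)"
    by (rule tendsto_mono[rotated]) (auto intro: at_le)
  have "eventually (\<lambda>y. (f y - f a) / (y - a) \<le> (f x - f a) / (x - a)) (at_right a)"
    using eventually_at_right_real[OF xa]
  proof eventually_elim
    fix y assume y: "y \<in> {a<..<x}"
    have "(f a - f y) / (a - y) \<le> (f a - f x) / (a - x)"
      using convex_on_slope_le(1)[OF cvx, of a x y] y by auto
    then show "(f y - f a) / (y - a) \<le> (f x - f a) / (x - a)"
      by (metis minus_diff_eq minus_divide_divide)
  qed
  then have "D \<le> (f x - f a) / (x - a)"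
    by (rule tendsto_upperbound[OF lim]) simp
  then have "D * (x - a) \<le> f x - f a"
    using xa by (simp add: le_divide_eq)
  then show ?thesis by simp
qed simp

lemma convex_on_atLeast_antimono:
  fixes f :: "real \<Rightarrow> real"
  assumes cvx: "convex_on {a..} f" and int: "f integrable_on {a..}" and nonneg: "\<forall>x\<ge>a. 0 \<le> f x"
    and "a \<le> x" "x \<le> y"
  shows "f y \<le> f x"
proof (rule ccontr)
  assume "\<not> f y \<le> f x"
  then have grow: "f x < f y" and xy: "x < y"
    using \<open>x \<le> y\<close> by (auto simp: order.order_iff_strict)
  have ge: "f y \<le> f z" if "y \<le> z" for z
  proof (cases "y = z")
    case False
    have "(f x - f y) / (x - y) \<le> (f x - f z) / (x - z)"
         "(f x - f z) / (x - z) \<le> (f y - f z) / (y - z)"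
      using convex_on_slope_le[OF cvx, of x z y] xy that False \<open>a \<le> x\<close> by auto
    moreover have "0 < (f x - f y) / (x - y)"
      using grow xy by (intro divide_neg_neg) auto
    ultimately have "0 < (f y - f z) / (y - z)" by linarith
    then show ?thesis
      using that False by (simp add: zero_less_divide_iff)
  qed simp
  define Z where "Z = y + (integral {a..} f + 1) / f y"
  have fy: "0 < f y"
    using nonneg grow \<open>a \<le> x\<close> by (meson le_less_trans)
  have "0 \<le> integral {a..} f"
    using nonneg by (intro integral_nonneg int) auto
  then have yZ: "y \<le> Z"
    using fy unfolding Z_def by simp
  have intyZ: "f integrable_on {y..Z}"
    using integrable_on_subinterval[OF int, of y Z] \<open>a \<le> x\<close> xy by auto
  have "integral {a..} f + 1 = integral {y..Z} (\<lambda>_. f y)"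
    using yZ fy unfolding Z_def by simp
  also have "\<dots> \<le> integral {y..Z} f"
    by (rule integral_le[OF integrable_const_ivl intyZ]) (simp add: ge)
  also have "\<dots> \<le> integral {a..} f"
    using \<open>a \<le> x\<close> xy nonneg by (intro integral_subset_le intyZ int) auto
  finally show False by simp
qed

lemma has_integral_atLeast_tail:
  fixes f :: "real \<Rightarrow> real"
  assumes f: "(f has_integral I) {a..}" and "a \<le> b"
  shows "(f has_integral (I - integral {a..b} f)) {b..}"
proof -
  have "f integrable_on {a..b}"
    using integrable_on_subinterval[OF has_integral_integrable[OF f]] by auto
  then have "(f has_integral integral {a..b} f) {a..b}"
    by (rule integrable_integral)
  then have "(f has_integral integral {a..b} f) {a..<b}"
    by (rule has_integral_spike_set_eq[THEN iffD1, rotated 2])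
      (auto intro: negligible_subset[of "{b}"])
  then have "(f has_integral (I - integral {a..b} f)) ({a..} - {a..<b})"
    by (rule has_integral_setdiff[OF f]) (auto intro: negligible_subset[of "{}"])
  moreover have "{a..} - {a..<b} = {b..}"
    using \<open>a \<le> b\<close> by auto
  ultimately show ?thesis by simp
qed

lemma integral_atLeastAtMost_attains:
  fixes f :: "real \<Rightarrow> real"
  assumes f: "(f has_integral I) {a..}" and vanish: "\<forall>x\<ge>E. f x = 0"
    and "a \<le> M" "integral {a..M} f \<le> y" "y \<le> I"
  shows "\<exists>q\<ge>M. integral {a..q} f = y"
proof -
  define E' where "E' = max E M"
  have "(f has_integral 0) {E'..}"
    by (rule has_integral_eq[OF _ has_integral_0]) (use vanish in \<open>auto simp: E'_def\<close>)
  then have "integral {a..E'} f = I"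
    using has_integral_unique[OF has_integral_atLeast_tail[OF f, of E']] \<open>a \<le> M\<close>
    unfolding E'_def by force
  moreover have "continuous_on {M..E'} (\<lambda>x. integral {a..x} f)"
    using indefinite_integral_continuous_1[of f a E'] integrable_on_subinterval[OF has_integral_integrable[OF f]]
      \<open>a \<le> M\<close> by (auto elim!: continuous_on_subset)
  ultimately obtain q where "M \<le> q" "q \<le> E'" "integral {a..q} f = y"
    using IVT'[of "\<lambda>x. integral {a..x} f" M y E'] assms unfolding E'_def by auto
  then show ?thesis by blast
qed

context
  fixes a \<beta> \<eta> \<nu> :: real and f :: "real \<Rightarrow> real"
  assumes feas: "feasible a \<beta> \<eta> \<nu> f"
begin

lemma feasible_has_integral: "(f has_integral \<beta>) {a..}"
  using feas by (simp add: feasible_def)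

lemma feasible_nonneg: "a \<le> x \<Longrightarrow> 0 \<le> f x"
  using feas by (simp add: feasible_def)

lemma feasible_integrable_on: "a \<le> u \<Longrightarrow> f integrable_on {u..v}"
  by (cases "u \<le> v")
    (auto intro: integrable_on_subinterval[OF has_integral_integrable[OF feasible_has_integral]])

lemma feasible_integral_tail: "a \<le> b \<Longrightarrow> integral {b..} f = \<beta> - integral {a..b} f"
  by (rule integral_unique[OF has_integral_atLeast_tail[OF feasible_has_integral]])

lemma feasible_above_tangent:
  assumes "a \<le> x"
  shows "\<eta> - \<nu> * (x - a) \<le> f x"
proof -
  obtain D where D: "(f has_real_derivative D) (at a within {a..})" "- \<nu> \<le> D"
    using feas by (auto simp: feasible_def)
  have "f a + D * (x - a) \<le> f x"
    using feas D(1) assms by (intro convex_on_atLeast_above_tangent) (auto simp: feasible_def)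
  moreover have "- \<nu> * (x - a) \<le> D * (x - a)"
    using D(2) assms by (intro mult_right_mono) auto
  ultimately show ?thesis
    using feas by (simp add: feasible_def)
qed

lemma feasible_antimono: "a \<le> x \<Longrightarrow> x \<le> y \<Longrightarrow> f y \<le> f x"
  using feas by (intro convex_on_atLeast_antimono[of a f])
    (auto simp: feasible_def intro: has_integral_integrable)

lemma feasible_integral_split:
  "a \<le> u \<Longrightarrow> u \<le> v \<Longrightarrow> integral {a..v} f = integral {a..u} f + integral {u..v} f"
  by (simp add: Henstock_Kurzweil_Integration.integral_combine feasible_integrable_on)

lemma feasible_tangent_mass_le_integral:
  assumes "0 \<le> t" "a + t \<le> b"
  shows "tangent_mass \<eta> \<nu> t \<le> integral {a..b} f"
proof -
  have "tangent_mass \<eta> \<nu> t = integral {a..a+t} (\<lambda>x. \<eta> - \<nu> * (x - a))"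
    using has_integral_tangent_mass[of a "a + t" \<eta> \<nu>] assms by (simp add: integral_unique)
  also have "\<dots> \<le> integral {a..a+t} f"
    using assms by (intro integral_le integrable_continuous_interval continuous_intros
        feasible_integrable_on feasible_above_tangent) auto
  also have "\<dots> \<le> integral {a..b} f"
    using feasible_integral_split[of "a + t" b] assms feasible_nonneg
    by (auto intro!: integral_nonneg feasible_integrable_on)
  finally show ?thesis .
qed

text \<open>Past the tangent piece the integrand is bounded below by its value at the right end point,
  which is either positive or makes the whole remaining mass vanish.\<close>
lemma feasible_tangent_mass_less_integral:
  assumes "\<nu> > 0" "\<eta>\<^sup>2 / (2 * \<nu>) < \<beta>" "0 \<le> t" "a + t < q"
  shows "tangent_mass \<eta> \<nu> t < integral {a..q} f"
proof (cases "f q = 0")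
  case True
  have "f x = 0" if "q \<le> x" for x
    using feasible_antimono[of q x] feasible_nonneg[of x] True that assms by force
  then have "(f has_integral 0) {q..}"
    by (intro has_integral_eq[OF _ has_integral_0]) auto
  then have "integral {a..q} f = \<beta>"
    using feasible_integral_tail[of q] assms by (simp add: integral_unique)
  then show ?thesis
    using tangent_mass_le_vertex[OF assms(1), of \<eta> t] assms(2) by simp
next
  case False
  then have fq: "0 < f q"
    using feasible_nonneg[of q] assms by force
  have "integral {a+t..q} (\<lambda>_. f q) \<le> integral {a+t..q} f"
    using assms by (intro integral_le feasible_integrable_on feasible_antimono) auto
  moreover have "0 < integral {a+t..q} (\<lambda>_. f q)"
    using fq assms by simp
  moreover have "tangent_mass \<eta> \<nu> t \<le> integral {a..a+t} f"
    using assms by (intro feasible_tangent_mass_le_integral) auto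
  ultimately show ?thesis
    using feasible_integral_split[of "a + t" q] assms by simp
qed

end

definition hinge :: "real \<Rightarrow> real \<Rightarrow> real \<Rightarrow> real \<Rightarrow> real \<Rightarrow> real" where
  "hinge c \<nu> s u x = max 0 (max (c - \<nu> * (x - u)) (c - s * (x - u)))"

lemma hinge_left:
  assumes "0 \<le> s" "s \<le> \<nu>" "0 \<le> c" "x \<le> u"
  shows "hinge c \<nu> s u x = c - \<nu> * (x - u)"
proof -
  have "s * (u - x) \<le> \<nu> * (u - x)" "0 \<le> \<nu> * (u - x)"
    using assms by (auto intro: mult_right_mono order_trans)
  then show ?thesis
    using assms by (simp add: hinge_def algebra_simps)
qed

lemma hinge_right:
  assumes "s \<le> \<nu>" "u \<le> x"
  shows "hinge c \<nu> s u x = max 0 (c - s * (x - u))"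
proof -
  have "s * (x - u) \<le> \<nu> * (x - u)"
    using assms by (intro mult_right_mono) auto
  then show ?thesis
    by (simp add: hinge_def)
qed

lemma convex_on_hinge: "convex_on UNIV (hinge c \<nu> s u)"
  unfolding hinge_def by (intro convex_on_max convex_on_affine convex_on_const[THEN iffD2]) simp

lemma has_integral_hinge:
  assumes "0 < s" "s \<le> \<nu>" "0 \<le> c" "a \<le> u"
  shows "(hinge c \<nu> s u has_integral
           tangent_mass (c + \<nu> * (u - a)) \<nu> (u - a) + c\<^sup>2 / (2 * s)) {a..}"
proof -
  define E where "E = u + c / s"
  have uE: "u \<le> E"
    using assms unfolding E_def by simp
  have "((\<lambda>x. (c + \<nu> * (u - a)) - \<nu> * (x - a)) has_integral
          tangent_mass (c + \<nu> * (u - a)) \<nu> (u - a)) {a..u}"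
    by (rule has_integral_tangent_mass[OF assms(4)])
  then have left: "(hinge c \<nu> s u has_integral tangent_mass (c + \<nu> * (u - a)) \<nu> (u - a)) {a..u}"
    by (rule has_integral_eq[rotated]) (use assms in \<open>simp add: hinge_left algebra_simps\<close>)
  have "tangent_mass c s (E - u) = c\<^sup>2 / (2 * s)"
    using tangent_mass_vertex[of s c] assms unfolding E_def by simp
  then have "((\<lambda>x. c - s * (x - u)) has_integral c\<^sup>2 / (2 * s)) {u..E}"
    using has_integral_tangent_mass[OF uE, of c s] by simp
  then have right: "(hinge c \<nu> s u has_integral c\<^sup>2 / (2 * s)) {u..E}"
  proof (rule has_integral_eq[rotated])
    fix x assume x: "x \<in> {u..E}"
    then have "s * (x - u) \<le> s * (c / s)"
      using assms unfolding E_def by (intro mult_left_mono) auto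
    then show "c - s * (x - u) = hinge c \<nu> s u x"
      using x assms by (simp add: hinge_right)
  qed
  have "hinge c \<nu> s u x = 0" if "E \<le> x" for x
  proof -
    have "s * (c / s) \<le> s * (x - u)"
      using that assms unfolding E_def by (intro mult_left_mono) auto
    then show ?thesis
      using that uE assms by (simp add: hinge_right)
  qed
  then have tail: "(hinge c \<nu> s u has_integral 0) {E..}"
    by (intro has_integral_eq[OF _ has_integral_0]) auto
  have "(hinge c \<nu> s u has_integral
          tangent_mass (c + \<nu> * (u - a)) \<nu> (u - a) + c\<^sup>2 / (2 * s) + 0) ({a..E} \<union> {E..})"
    by (intro has_integral_Un has_integral_combine[OF assms(4) uE left right] tail)
      (auto intro: negligible_subset[of "{E}"])
  moreover have "{a..E} \<union> {E..} = {a..}"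
    using assms uE by auto
  ultimately show ?thesis by simp
qed

lemma zstar_ge_integral: "feasible a \<beta> \<eta> \<nu> f \<Longrightarrow> ereal (integral {b..} f) \<le> zstar a \<beta> \<eta> \<nu> b"
  unfolding zstar_def by (rule Sup_upper) blast

context
  fixes a \<beta> \<eta> \<nu> :: real
  assumes \<eta>: "\<eta> > 0" and \<nu>: "\<nu> > 0" and mass: "\<eta>\<^sup>2 < 2 * \<beta> * \<nu>"
begin

lemma vertex_mass_less: "\<eta>\<^sup>2 / (2 * \<nu>) < \<beta>"
  using mass \<nu> by (simp add: divide_less_eq algebra_simps)

text \<open>The witness follows the tangent down to height \<open>c\<close> and then puts the remaining mass
  \<open>B\<close> under a triangle of height \<open>c\<close>; its slope \<open>s = c\<^sup>2 / (2 B)\<close> is admissible,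
  i.e. at most \<open>\<nu>\<close>, because \<open>\<eta>\<^sup>2 < 2 \<beta> \<nu>\<close>.\<close>
lemma feasible_hinge:
  assumes c: "0 < c" "c < \<eta>"
  obtains s where "0 < s" "s \<le> \<nu>" "feasible a \<beta> \<eta> \<nu> (hinge c \<nu> s (a + (\<eta> - c) / \<nu>))"
proof
  define t where "t = (\<eta> - c) / \<nu>"
  define B where "B = \<beta> - tangent_mass \<eta> \<nu> t"
  define s where "s = c\<^sup>2 / (2 * B)"
  define f where "f = hinge c \<nu> s (a + t)"
  have t: "0 < t" and ct: "c + \<nu> * t = \<eta>"
    using c \<nu> unfolding t_def by simp_all
  have "2 * \<nu> * B = 2 * \<nu> * \<beta> - \<eta>\<^sup>2 + c\<^sup>2"
    using \<nu> unfolding B_def tangent_mass_def t_def by (simp add: field_simps power2_eq_square)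
  then have B: "c\<^sup>2 < 2 * \<nu> * B"
    using mass by (simp add: algebra_simps)
  then have "0 < 2 * \<nu> * B"
    by (meson zero_le_power2 le_less_trans)
  then have "0 < B"
    using \<nu> by (simp add: zero_less_mult_iff)
  then show s: "0 < s" and "s \<le> \<nu>"
    using c B unfolding s_def by (simp_all add: divide_le_eq algebra_simps)
  have "c\<^sup>2 / (2 * s) = B"
    using c \<open>0 < B\<close> unfolding s_def by simp
  then have integral: "(f has_integral \<beta>) {a..}"
    using has_integral_hinge[OF s \<open>s \<le> \<nu>\<close>, of c a "a + t"] c t
    unfolding f_def by (simp add: ct B_def)
  have tangent: "f x = \<eta> - \<nu> * (x - a)" if "x \<le> a + t" for x
    using hinge_left[of s \<nu> c x "a + t"] s \<open>s \<le> \<nu>\<close> c that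
    unfolding f_def by (simp add: ct[symmetric] algebra_simps)
  have "isCont f a"
    unfolding f_def hinge_def by (intro continuous_intros)
  then have "(f \<longlongrightarrow> \<eta>) (at_right a)"
    using tangent[of a] t unfolding isCont_def by (auto intro: tendsto_mono at_le)
  moreover have "(f has_real_derivative - \<nu>) (at a within {a..})"
  proof (rule has_field_derivative_transform_within[OF _ t])
    show "((\<lambda>x. \<eta> - \<nu> * (x - a)) has_real_derivative - \<nu>) (at a within {a..})"
      by (auto intro!: derivative_eq_intros)
    show "\<eta> - \<nu> * (x - a) = f x" if "x \<in> {a..}" "dist x a < t" for x
      using that tangent by (simp add: dist_real_def)
  qed simp
  moreover have "convex_on {a..} f"
    unfolding f_def by (rule convex_on_subset[OF convex_on_hinge]) auto
  moreover have "0 \<le> f x" for x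
    unfolding f_def hinge_def by simp
  ultimately show "feasible a \<beta> \<eta> \<nu> (hinge c \<nu> s (a + (\<eta> - c) / \<nu>))"
    using integral tangent[of a] t \<nu>
    unfolding feasible_def f_def[symmetric] t_def[symmetric] by auto
qed

lemma feasible_witness:
  assumes c: "0 < c" "c < \<eta>"
  obtains f where "feasible a \<beta> \<eta> \<nu> f"
    "integral {a..a + (\<eta> - c) / \<nu>} f = tangent_mass \<eta> \<nu> ((\<eta> - c) / \<nu>)"
    "\<And>b. a \<le> b \<Longrightarrow> integral {a..b} f \<le> \<eta>\<^sup>2 / (2 * \<nu>) + c * (b - a)"
    "\<exists>E. \<forall>x\<ge>E. f x = 0"
proof -
  define t where "t = (\<eta> - c) / \<nu>"
  obtain s where s: "0 < s" "s \<le> \<nu>" and feas: "feasible a \<beta> \<eta> \<nu> (hinge c \<nu> s (a + t))"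
    using feasible_hinge[OF c] unfolding t_def by blast
  define f where "f = hinge c \<nu> s (a + t)"
  have t: "0 < t" and ct: "c + \<nu> * t = \<eta>"
    using c \<nu> unfolding t_def by simp_all
  have right: "f x = max 0 (c - s * (x - (a + t)))" if "a + t \<le> x" for x
    using hinge_right[OF s(2) that] unfolding f_def .
  have "((\<lambda>x. \<eta> - \<nu> * (x - a)) has_integral tangent_mass \<eta> \<nu> t) {a..a+t}"
    using has_integral_tangent_mass[of a "a + t" \<eta> \<nu>] t by simp
  then have "(f has_integral tangent_mass \<eta> \<nu> t) {a..a+t}"
    by (rule has_integral_eq[rotated])
      (use s c in \<open>auto simp: f_def hinge_left ct[symmetric] algebra_simps\<close>)
  then have left: "integral {a..a+t} f = tangent_mass \<eta> \<nu> t"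
    by (rule integral_unique)
  have "integral {a..b} f \<le> \<eta>\<^sup>2 / (2 * \<nu>) + c * (b - a)" if "a \<le> b" for b
  proof -
    define b' where "b' = max b (a + t)"
    have "integral {a..b} f \<le> integral {a..b'} f"
      using feasible_integral_split[OF feas, of b b'] feasible_nonneg[OF feas] that
      unfolding f_def b'_def by (auto intro!: integral_nonneg feasible_integrable_on[OF feas])
    also have "\<dots> = integral {a..a+t} f + integral {a+t..b'} f"
      using feasible_integral_split[OF feas, of "a + t" b'] t unfolding f_def b'_def by simp
    also have "\<dots> \<le> tangent_mass \<eta> \<nu> t + integral {a+t..b'} (\<lambda>_. c)"
    proof -
      have "integral {a+t..b'} f \<le> integral {a+t..b'} (\<lambda>_. c)"
        using right t c s unfolding f_def
        by (intro integral_le feasible_integrable_on[OF feas] integrable_const_ivl) auto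
      then show ?thesis
        using left by simp
    qed
    also have "\<dots> \<le> \<eta>\<^sup>2 / (2 * \<nu>) + c * (b - a)"
    proof -
      have "a + t \<le> b'" "(b' - (a + t)) * c \<le> (b - a) * c"
        using c t that by (auto simp: b'_def intro!: mult_right_mono)
      then show ?thesis
        using tangent_mass_le_vertex[OF \<nu>, of \<eta> t] by (simp add: mult.commute)
    qed
    finally show ?thesis .
  qed
  moreover have "f x = 0" if "a + t + c / s \<le> x" for x
  proof -
    have "s * (c / s) \<le> s * (x - (a + t))"
      using that s by (intro mult_left_mono) auto
    moreover have "a + t \<le> x"
      using that s c by (smt (verit) divide_pos_pos)
    ultimately show ?thesis
      using s by (simp add: right)
  qed
  ultimately show ?thesis
    using that feas left unfolding f_def t_def by blast
qed

lemma exists_feasible_tangent_mass: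
  assumes "0 \<le> t" "t < \<eta> / \<nu>"
  shows "\<exists>f. feasible a \<beta> \<eta> \<nu> f \<and> integral {a..a+t} f = tangent_mass \<eta> \<nu> t \<and>
    (\<exists>E. \<forall>x\<ge>E. f x = 0)"
proof (cases "t = 0")
  case True
  have "0 < \<eta> / 2" "\<eta> / 2 < \<eta>"
    using \<eta> by auto
  then obtain f where "feasible a \<beta> \<eta> \<nu> f" "\<exists>E. \<forall>x\<ge>E. f x = 0"
    using feasible_witness by metis
  then show ?thesis
    using True by (auto simp: tangent_mass_def)
next
  case False
  have "\<nu> * t < \<eta>"
    using assms \<nu> by (simp add: less_divide_eq mult.commute)
  then have "0 < \<eta> - \<nu> * t" "\<eta> - \<nu> * t < \<eta>" and "(\<eta> - (\<eta> - \<nu> * t)) / \<nu> = t"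
    using False assms \<nu> by auto
  then show ?thesis
    using feasible_witness[of "\<eta> - \<nu> * t"] by metis
qed

lemma zstar_eq:
  assumes "a \<le> b"
  shows "zstar a \<beta> \<eta> \<nu> b = ereal (\<beta> - tangent_mass \<eta> \<nu> (min (b - a) (\<eta> / \<nu>)))"
proof (rule antisym)
  show "zstar a \<beta> \<eta> \<nu> b \<le> ereal (\<beta> - tangent_mass \<eta> \<nu> (min (b - a) (\<eta> / \<nu>)))"
    unfolding zstar_def
  proof (rule Sup_least)
    fix z assume "z \<in> {ereal (integral {b..} f) |f. feasible a \<beta> \<eta> \<nu> f}"
    then obtain f where z: "z = ereal (integral {b..} f)" and feas: "feasible a \<beta> \<eta> \<nu> f"
      by blast
    have "tangent_mass \<eta> \<nu> (min (b - a) (\<eta> / \<nu>)) \<le> integral {a..b} f"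
      using \<eta> \<nu> assms by (intro feasible_tangent_mass_le_integral[OF feas]) auto
    then show "z \<le> ereal (\<beta> - tangent_mass \<eta> \<nu> (min (b - a) (\<eta> / \<nu>)))"
      using feasible_integral_tail[OF feas assms] z by simp
  qed
next
  show "ereal (\<beta> - tangent_mass \<eta> \<nu> (min (b - a) (\<eta> / \<nu>))) \<le> zstar a \<beta> \<eta> \<nu> b"
  proof (cases "b - a < \<eta> / \<nu>")
    case True
    then obtain f where feas: "feasible a \<beta> \<eta> \<nu> f"
      and "integral {a..b} f = tangent_mass \<eta> \<nu> (b - a)"
      using exists_feasible_tangent_mass[of "b - a"] assms by auto
    then show ?thesis
      using zstar_ge_integral[OF feas, of b] feasible_integral_tail[OF feas assms] True by simp
  next
    case False
    moreover have "0 < \<eta> / \<nu>"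
      using \<eta> \<nu> by simp
    ultimately have b: "0 < b - a" "min (b - a) (\<eta> / \<nu>) = \<eta> / \<nu>"
      by auto
    show ?thesis
      unfolding b(2) tangent_mass_vertex[OF \<nu>[THEN less_imp_neq, symmetric]]
    proof (rule ereal_le_epsilon2)
      fix e :: real assume "0 < e"
      define c where "c = min (\<eta> / 2) (e / (b - a))"
      have c: "0 < c" "c < \<eta>" "c * (b - a) \<le> e"
        using \<eta> \<open>0 < e\<close> b(1) by (auto simp: c_def min_def field_simps)
      obtain f where feas: "feasible a \<beta> \<eta> \<nu> f"
        and bound: "integral {a..b} f \<le> \<eta>\<^sup>2 / (2 * \<nu>) + c * (b - a)"
        using feasible_witness[OF c(1,2)] assms by metis
      have "ereal (\<beta> - \<eta>\<^sup>2 / (2 * \<nu>)) \<le> ereal (integral {b..} f) + ereal e"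
        using feasible_integral_tail[OF feas assms] bound c(3) by simp
      also have "\<dots> \<le> zstar a \<beta> \<eta> \<nu> b + ereal e"
        by (intro add_right_mono zstar_ge_integral[OF feas])
      finally show "ereal (\<beta> - \<eta>\<^sup>2 / (2 * \<nu>)) \<le> zstar a \<beta> \<eta> \<nu> b + ereal e" .
    qed
  qed
qed

lemma qstar_eq:
  assumes "0 \<le> t" "t \<le> \<eta> / \<nu>" "p = 1 - \<beta> + tangent_mass \<eta> \<nu> t"
  shows "qstar a \<beta> \<eta> \<nu> p = ereal (a + t)"
proof -
  have level: "zstar a \<beta> \<eta> \<nu> b = ereal (1 - p) \<longleftrightarrow>
      tangent_mass \<eta> \<nu> (min (b - a) (\<eta> / \<nu>)) = tangent_mass \<eta> \<nu> t" if "a \<le> b" for b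
    using zstar_eq[OF that] assms(3) by auto
  show ?thesis
    unfolding qstar_def
  proof (rule antisym)
    show "Inf {ereal b |b. a \<le> b \<and> zstar a \<beta> \<eta> \<nu> b = ereal (1 - p)} \<le> ereal (a + t)"
      by (rule Inf_lower) (use level[of "a + t"] assms in auto)
  next
    show "ereal (a + t) \<le> Inf {ereal b |b. a \<le> b \<and> zstar a \<beta> \<eta> \<nu> b = ereal (1 - p)}"
    proof (rule Inf_greatest)
      fix z assume "z \<in> {ereal b |b. a \<le> b \<and> zstar a \<beta> \<eta> \<nu> b = ereal (1 - p)}"
      then obtain b where z: "z = ereal b" and "a \<le> b"
        and level_b: "tangent_mass \<eta> \<nu> (min (b - a) (\<eta> / \<nu>)) = tangent_mass \<eta> \<nu> t"
        using level by blast
      show "ereal (a + t) \<le> z"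
      proof (rule ccontr)
        assume "\<not> ereal (a + t) \<le> z"
        then have "b - a < t" "min (b - a) (\<eta> / \<nu>) = b - a"
          using z assms(2) by auto
        then show False
          using tangent_mass_strict_mono[OF \<nu>, of "b - a" t \<eta>] level_b assms(2) by simp
      qed
    qed
  qed
qed

lemma qstar_infinite:
  assumes "1 - \<beta> + \<eta>\<^sup>2 / (2 * \<nu>) < p"
  shows "qstar a \<beta> \<eta> \<nu> p = \<infinity>"
proof -
  have "zstar a \<beta> \<eta> \<nu> b \<noteq> ereal (1 - p)" if "a \<le> b" for b
    using zstar_eq[OF that] tangent_mass_le_vertex[OF \<nu>, of \<eta> "min (b - a) (\<eta> / \<nu>)"] assms
    by auto
  then have empty: "{ereal b |b. a \<le> b \<and> zstar a \<beta> \<eta> \<nu> b = ereal (1 - p)} = {}"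
    by blast
  show ?thesis
    unfolding qstar_def empty by (simp add: top_ereal_def)
qed

lemma quantile_value_eq:
  assumes "0 \<le> t" "t \<le> \<eta> / \<nu>" "p = 1 - \<beta> + tangent_mass \<eta> \<nu> t"
  shows "quantile_value a \<beta> \<eta> \<nu> p = ereal (a + t)"
  unfolding quantile_value_def
proof (rule antisym)
  let ?Q = "{ereal q |q f. a \<le> q \<and> feasible a \<beta> \<eta> \<nu> f \<and> 1 - \<beta> + integral {a..q} f = p}"
  show "Sup ?Q \<le> ereal (a + t)"
  proof (rule Sup_least)
    fix z assume "z \<in> ?Q"
    then obtain q f where z: "z = ereal q" and feas: "feasible a \<beta> \<eta> \<nu> f"
      and mass_q: "integral {a..q} f = tangent_mass \<eta> \<nu> t"
      using assms(3) by auto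
    show "z \<le> ereal (a + t)"
    proof (rule ccontr)
      assume "\<not> z \<le> ereal (a + t)"
      then have "tangent_mass \<eta> \<nu> t < integral {a..q} f"
        using z by (intro feasible_tangent_mass_less_integral[OF feas \<nu> vertex_mass_less assms(1)]) auto
      then show False
        using mass_q by simp
    qed
  qed
next
  let ?Q = "{ereal q |q f. a \<le> q \<and> feasible a \<beta> \<eta> \<nu> f \<and> 1 - \<beta> + integral {a..q} f = p}"
  have reach: "ereal (a + t') \<le> Sup ?Q" if t': "0 \<le> t'" "t' < \<eta> / \<nu>" "t' \<le> t" for t'
  proof -
    obtain f E where feas: "feasible a \<beta> \<eta> \<nu> f"
      and mass_t': "integral {a..a+t'} f = tangent_mass \<eta> \<nu> t'" and vanish: "\<forall>x\<ge>E. f x = 0"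
      using exists_feasible_tangent_mass[OF t'(1,2)] by blast
    have "tangent_mass \<eta> \<nu> t' \<le> tangent_mass \<eta> \<nu> t"
      using tangent_mass_strict_mono[OF \<nu>, of t' t \<eta>] t' assms(2) by (cases "t' = t") auto
    moreover have "tangent_mass \<eta> \<nu> t \<le> \<beta>"
      using tangent_mass_le_vertex[OF \<nu>, of \<eta> t] vertex_mass_less by simp
    ultimately obtain q where q: "a + t' \<le> q" "integral {a..q} f = tangent_mass \<eta> \<nu> t"
      using integral_atLeastAtMost_attains[OF feasible_has_integral[OF feas] vanish, of "a + t'"]
        mass_t' t' by auto
    then have "ereal q \<in> ?Q"
      using feas assms(3) t' by auto
    then show ?thesis
      using q(1) by (meson Sup_upper ereal_less_eq(3) order_trans)
  qed
  show "ereal (a + t) \<le> Sup ?Q"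
  proof (cases "t < \<eta> / \<nu>")
    case True
    then show ?thesis
      using reach[of t] assms by simp
  next
    case False
    then have t: "t = \<eta> / \<nu>" "0 < t"
      using assms \<eta> \<nu> by auto
    show ?thesis
    proof (rule dense_le_bounded[of "ereal a"])
      show "ereal a < ereal (a + t)"
        using t by simp
      fix w assume w: "ereal a < w" "w < ereal (a + t)"
      then obtain w' where "w = ereal w'" "a < w'" "w' < a + t"
        by (cases w) auto
      then show "w \<le> Sup ?Q"
        using reach[of "w' - a"] t by simp
    qed
  qed
qed

lemma quantile_value_infinite:
  assumes "1 - \<beta> + \<eta>\<^sup>2 / (2 * \<nu>) < p" "p \<le> 1"
  shows "quantile_value a \<beta> \<eta> \<nu> p = \<infinity>"
  unfolding quantile_value_def
proof (rule ereal_top)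
  fix M
  define M' where "M' = max M a + 1"
  define \<delta> where "\<delta> = p - (1 - \<beta>) - \<eta>\<^sup>2 / (2 * \<nu>)"
  define c where "c = min (\<eta> / 2) (\<delta> / (M' - a))"
  have M': "a \<le> M'" "M \<le> M'" "0 < M' - a"
    unfolding M'_def by auto
  have "0 < \<delta>"
    using assms(1) unfolding \<delta>_def by simp
  then have c: "0 < c" "c < \<eta>"
    using \<eta> M'(3) by (auto simp: c_def)
  have "c * (M' - a) \<le> \<delta> / (M' - a) * (M' - a)"
    using M'(3) by (intro mult_right_mono) (auto simp: c_def)
  then have "c * (M' - a) \<le> \<delta>"
    using M'(3) by simp
  obtain f where feas: "feasible a \<beta> \<eta> \<nu> f"
    and bound: "integral {a..M'} f \<le> \<eta>\<^sup>2 / (2 * \<nu>) + c * (M' - a)"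
    and "\<exists>E. \<forall>x\<ge>E. f x = 0"
    using feasible_witness[OF c] M' by metis
  then obtain E where vanish: "\<forall>x\<ge>E. f x = 0"
    by blast
  have "integral {a..M'} f \<le> p - (1 - \<beta>)" "p - (1 - \<beta>) \<le> \<beta>"
    using bound \<open>c * (M' - a) \<le> \<delta>\<close> assms(2) unfolding \<delta>_def by auto
  then obtain q where q: "M' \<le> q" "integral {a..q} f = p - (1 - \<beta>)"
    using integral_atLeastAtMost_attains[OF feasible_has_integral[OF feas] vanish M'(1)] by blast
  then have "ereal q \<in> {ereal q |q f. a \<le> q \<and> feasible a \<beta> \<eta> \<nu> f \<and> 1 - \<beta> + integral {a..q} f = p}"
    using feas M'(1) by auto
  then show "ereal M \<le> Sup {ereal q |q f. a \<le> q \<and> feasible a \<beta> \<eta> \<nu> f \<and> 1 - \<beta> + integral {a..q} f = p}"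
    using q(1) M'(2) by (meson Sup_upper ereal_less_eq(3) order_trans)
qed

end

theorem theorem4:
  fixes a \<beta> \<eta> \<nu> \<mu> \<sigma> p :: real
  assumes "\<beta> > 0" "\<eta> > 0" "\<nu> > 0" "\<eta>\<^sup>2 < 2 * \<beta> * \<nu>"
    and "\<mu> = \<eta> / \<nu>" "\<sigma> = 2 * \<beta> / \<nu>"
    and "1 - \<beta> \<le> p" "p \<le> 1"
  shows "quantile_value a \<beta> \<eta> \<nu> p = qstar a \<beta> \<eta> \<nu> p \<and>
    (p \<le> 1 - \<beta> + \<eta>\<^sup>2 / (2 * \<nu>) \<longrightarrow>
       qstar a \<beta> \<eta> \<nu> p = ereal (a + \<mu> - sqrt (\<mu>\<^sup>2 - \<sigma> + 2 * (1 - p) / \<nu>))) \<and>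
    (p > 1 - \<beta> + \<eta>\<^sup>2 / (2 * \<nu>) \<longrightarrow> qstar a \<beta> \<eta> \<nu> p = \<infinity>)"
proof (cases "p \<le> 1 - \<beta> + \<eta>\<^sup>2 / (2 * \<nu>)")
  case True
  define m where "m = p - (1 - \<beta>)"
  define t where "t = \<eta> / \<nu> - sqrt ((\<eta> / \<nu>)\<^sup>2 - 2 * m / \<nu>)"
  have "0 \<le> m" "m \<le> \<eta>\<^sup>2 / (2 * \<nu>)"
    using True assms(7) unfolding m_def by auto
  then have t: "0 \<le> t" "t \<le> \<eta> / \<nu>" and p: "p = 1 - \<beta> + tangent_mass \<eta> \<nu> t"
    using tangent_mass_inverse[of \<nu> \<eta> m] assms(2,3) unfolding t_def m_def by auto
  have "\<mu>\<^sup>2 - \<sigma> + 2 * (1 - p) / \<nu> = (\<eta> / \<nu>)\<^sup>2 - 2 * m / \<nu>"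
    using assms(3) unfolding assms(5,6) m_def by (simp add: field_simps)
  then have "a + \<mu> - sqrt (\<mu>\<^sup>2 - \<sigma> + 2 * (1 - p) / \<nu>) = a + t"
    unfolding t_def assms(5) by simp
  then show ?thesis
    using qstar_eq[OF assms(2-4) t p] quantile_value_eq[OF assms(2-4) t p] True by simp
next
  case False
  then show ?thesis
    using qstar_infinite[OF assms(2-4)] quantile_value_infinite[OF assms(2-4) _ assms(8)] by simp
qed

end
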